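(* Let $G$ be a connected graph, $k \ge 2$ an integer, and $\Pi_1, \Pi_2 \in \mathrm{Part}(G,k)$. Then there exists a block vertex $v \in V(G)$ such that a sequence of at most three recombination moves transforms $\Pi_1$ into a connected $k$-partition in which $\{v\}$ is a district, and a sequence of at most three recombination moves transforms $\Pi_2$ into a connected $k$-partition in which $\{v\}$ is a district.
   Context: For a graph $G$ and positive integer $k$, a connected $k$-partition of $G$ is a partition of $V(G)$ into $k$ disjoint nonempty sets $V_1,\dots,V_k$ (called districts) such that each induced subgraph $G[V_i]$ is connected; $\mathrm{Part}(G,k)$ denotes the set of all connected $k$-partitions of $G$. Two distinct connected $k$-partitions $\{V_1,\dots,V_k\}$ and $\{W_1,\dots,W_k\}$ are related by a recombination move if there are indices $i,j$ and a permutation $\pi$ of $\{1,\dots,k\}$ with $V_i \cup V_j = W_{\pi(i)} \cup W_{\pi(j)}$ and $V_\ell = W_{\pi(\ell)}$ for all $\ell \notin \{i,j\}$ (here there is no size restriction on districts). A block is a maximal biconnected component; a vertex is a cut vertex if it lies in two or more blocks, and a block vertex otherwise. *)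

theory Defs
  imports Main
begin

definition simple_graph :: "'a set \<Rightarrow> ('a \<Rightarrow> 'a \<Rightarrow> bool) \<Rightarrow> bool" where
  "simple_graph V E \<longleftrightarrow> finite V \<and> (\<forall>x y. E x y \<longrightarrow> x \<in> V \<and> y \<in> V)
     \<and> (\<forall>x y. E x y \<longrightarrow> E y x) \<and> (\<forall>x. \<not> E x x)"

definition connected_on :: "('a \<Rightarrow> 'a \<Rightarrow> bool) \<Rightarrow> 'a set \<Rightarrow> bool" where
  "connected_on E S \<longleftrightarrow> S \<noteq> {} \<and>
     (\<forall>x\<in>S. \<forall>y\<in>S. (\<lambda>a b. a \<in> S \<and> b \<in> S \<and> E a b)\<^sup>*\<^sup>* x y)"

definition conn_partition :: "'a set \<Rightarrow> ('a \<Rightarrow> 'a \<Rightarrow> bool) \<Rightarrow> nat \<Rightarrow> 'a set set \<Rightarrow> bool" where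
  "conn_partition V E k P \<longleftrightarrow> \<Union>P = V \<and> (\<forall>A\<in>P. \<forall>B\<in>P. A \<noteq> B \<longrightarrow> A \<inter> B = {})
     \<and> (\<forall>A\<in>P. A \<noteq> {} \<and> connected_on E A) \<and> finite P \<and> card P = k"

definition recomb_move :: "'a set \<Rightarrow> ('a \<Rightarrow> 'a \<Rightarrow> bool) \<Rightarrow> nat \<Rightarrow> 'a set set \<Rightarrow> 'a set set \<Rightarrow> bool" where
  "recomb_move V E k P Q \<longleftrightarrow> conn_partition V E k P \<and> conn_partition V E k Q \<and> P \<noteq> Q \<and>
     (\<exists>A\<in>P. \<exists>B\<in>P. \<exists>C\<in>Q. \<exists>D\<in>Q. A \<noteq> B \<and> C \<noteq> D \<and> A \<union> B = C \<union> D \<and> P - {A, B} = Q - {C, D})"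

definition nonseparable :: "'a set \<Rightarrow> ('a \<Rightarrow> 'a \<Rightarrow> bool) \<Rightarrow> 'a set \<Rightarrow> bool" where
  "nonseparable V E B \<longleftrightarrow> B \<subseteq> V \<and> connected_on E B \<and>
     (\<forall>x\<in>B. B - {x} \<noteq> {} \<longrightarrow> connected_on E (B - {x}))"

definition is_block :: "'a set \<Rightarrow> ('a \<Rightarrow> 'a \<Rightarrow> bool) \<Rightarrow> 'a set \<Rightarrow> bool" where
  "is_block V E B \<longleftrightarrow> nonseparable V E B \<and> (\<forall>C. nonseparable V E C \<and> B \<subseteq> C \<longrightarrow> C = B)"

definition cut_vertex :: "'a set \<Rightarrow> ('a \<Rightarrow> 'a \<Rightarrow> bool) \<Rightarrow> 'a \<Rightarrow> bool" where
  "cut_vertex V E v \<longleftrightarrow> (\<exists>B1 B2. is_block V E B1 \<and> is_block V E B2 \<and> B1 \<noteq> B2 \<and> v \<in> B1 \<and> v \<in> B2)"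

definition block_vertex :: "'a set \<Rightarrow> ('a \<Rightarrow> 'a \<Rightarrow> bool) \<Rightarrow> 'a \<Rightarrow> bool" where
  "block_vertex V E v \<longleftrightarrow> v \<in> V \<and> \<not> cut_vertex V E v"

end

theory Submission
  imports Defs
begin

(* Take c and x such that the component K of x in V - {c} is as small as possible. Then no vertex
   of K separates V, and a vertex whose removal leaves V connected lies in a single block: two
   blocks through it, joined by a minimal connected set avoiding it, would form a larger
   nonseparable set.

   A vertex v with V - {v} connected is split off its district A by moving the components of
   A - {v}, one per recombination move, into neighbouring districts.

   It remains to find v in K for which A - {v} has at most three components in both partitions.
   At most one component of A - {v} leaves K, so a vertex with four or more splits its component
   of A \<inter> K into at least three parts. For connected M the sum over v of
   (number of components of M - {v}) - 1 is at most |M| - 2, so fewer than half of the vertices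
   of K are of this kind in each partition. *)

section \<open>Walks and components inside a vertex set\<close>

definition reach :: "('a \<Rightarrow> 'a \<Rightarrow> bool) \<Rightarrow> 'a set \<Rightarrow> 'a \<Rightarrow> 'a \<Rightarrow> bool" where
  "reach E S x y \<longleftrightarrow> (\<lambda>a b. a \<in> S \<and> b \<in> S \<and> E a b)\<^sup>*\<^sup>* x y"

definition component :: "('a \<Rightarrow> 'a \<Rightarrow> bool) \<Rightarrow> 'a set \<Rightarrow> 'a \<Rightarrow> 'a set" where
  "component E S x = {y. reach E S x y}"

definition num_components :: "('a \<Rightarrow> 'a \<Rightarrow> bool) \<Rightarrow> 'a set \<Rightarrow> nat" where
  "num_components E S = card (component E S ` S)"

lemma reach_refl [simp]: "reach E S x x"
  by (simp add: reach_def)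

lemma reach_trans: "reach E S x y \<Longrightarrow> reach E S y z \<Longrightarrow> reach E S x z"
  unfolding reach_def by (rule rtranclp_trans)

lemma reach_edge: "x \<in> S \<Longrightarrow> y \<in> S \<Longrightarrow> E x y \<Longrightarrow> reach E S x y"
  unfolding reach_def by (rule r_into_rtranclp) simp

lemma reach_mono: "reach E S x y \<Longrightarrow> S \<subseteq> T \<Longrightarrow> reach E T x y"
  unfolding reach_def by (erule rtranclp_mono[THEN predicate2D, rotated]) auto

lemma reach_in: "reach E S x y \<Longrightarrow> x \<in> S \<Longrightarrow> y \<in> S"
  unfolding reach_def by (induction rule: rtranclp_induct) auto

lemma reach_avoid:
  assumes "reach E S x y" and "\<And>z. reach E S x z \<Longrightarrow> z \<notin> C"
  shows "reach E (S - C) x y"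
  using assms unfolding reach_def
proof (induction rule: rtranclp_induct)
  case (step z w)
  then have "z \<notin> C" "w \<notin> C" by (auto intro: rtranclp.rtrancl_into_rtrancl)
  with step show ?case by (auto intro: rtranclp.rtrancl_into_rtrancl)
qed simp

lemma reach_last_edge:
  assumes "reach E S x t" and "x \<noteq> t"
  shows "\<exists>u. reach E (S - {t}) x u \<and> u \<in> S \<and> E u t"
  using assms unfolding reach_def
proof (induction rule: converse_rtranclp_induct)
  case (step x y)
  show ?case
  proof (cases "y = t")
    case False
    with step obtain u where u: "(\<lambda>a b. a \<in> S - {t} \<and> b \<in> S - {t} \<and> E a b)\<^sup>*\<^sup>* y u" "u \<in> S" "E u t"
      by blast
    have "(\<lambda>a b. a \<in> S - {t} \<and> b \<in> S - {t} \<and> E a b) x y" using step False by auto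
    with u show ?thesis by (blast intro: converse_rtranclp_into_rtranclp)
  qed (use step in auto)
qed simp

lemma reach_crossing_edge:
  assumes "reach E S x y" and "x \<in> C" and "y \<notin> C"
  shows "\<exists>a b. a \<in> C \<and> b \<notin> C \<and> a \<in> S \<and> b \<in> S \<and> E a b"
  using assms unfolding reach_def
  by (induction rule: rtranclp_induct) blast+

lemma connected_on_iff_reach: "connected_on E S \<longleftrightarrow> S \<noteq> {} \<and> (\<forall>x\<in>S. \<forall>y\<in>S. reach E S x y)"
  unfolding connected_on_def reach_def by simp

lemma connected_on_singleton: "connected_on E {x}"
  unfolding connected_on_iff_reach by simp

lemma in_component_iff: "y \<in> component E S x \<longleftrightarrow> reach E S x y"
  unfolding component_def by simp

lemma component_subset: "x \<in> S \<Longrightarrow> component E S x \<subseteq> S"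
  unfolding component_def using reach_in by fast

lemma in_component_self: "x \<in> component E S x"
  unfolding component_def by simp

lemma component_eq_if_connected:
  assumes "connected_on E S" and "x \<in> S"
  shows "component E S x = S"
proof
  show "component E S x \<subseteq> S" using assms(2) by (rule component_subset)
  show "S \<subseteq> component E S x" using assms unfolding connected_on_iff_reach component_def by auto
qed

lemma num_components_connected:
  assumes "connected_on E S"
  shows "num_components E S = 1"
proof -
  have "component E S ` S = {S}"
    using component_eq_if_connected[OF assms] assms unfolding connected_on_def by auto
  then show ?thesis unfolding num_components_def by simp
qed

lemma num_components_empty [simp]: "num_components E {} = 0"
  unfolding num_components_def by simp

lemma num_components_pos: "finite S \<Longrightarrow> S \<noteq> {} \<Longrightarrow> 1 \<le> num_components E S"
  unfolding num_components_def by (simp add: Suc_leI card_gt_0_iff)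

lemma neighbor_in_component:
  assumes "connected_on E A" and "v \<in> A" and "y \<in> A - {v}"
  shows "\<exists>u\<in>component E (A - {v}) y. E u v"
proof -
  have "reach E A y v" using assms unfolding connected_on_iff_reach by blast
  with assms(3) show ?thesis unfolding component_def by (auto dest: reach_last_edge)
qed

lemma card_image_le_if_factors:
  assumes "finite A" and "\<And>x y. x \<in> A \<Longrightarrow> y \<in> A \<Longrightarrow> g x = g y \<Longrightarrow> f x = f y"
  shows "card (f ` A) \<le> card (g ` A)"
proof -
  define h where "h c = f (SOME x. x \<in> A \<and> g x = c)" for c
  have "h (g x) = f x" if "x \<in> A" for x
  proof -
    from that have "\<exists>y. y \<in> A \<and> g y = g x" by blast
    then have "(SOME y. y \<in> A \<and> g y = g x) \<in> A \<and> g (SOME y. y \<in> A \<and> g y = g x) = g x"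
      by (rule someI_ex)
    then show ?thesis unfolding h_def using assms(2) that by metis
  qed
  then have "f ` A = h ` g ` A" unfolding image_image by (simp cong: image_cong)
  then show ?thesis using assms(1) by (simp add: card_image_le)
qed

lemma Diff_singleton_nonempty:
  assumes "2 \<le> card M"
  shows "M - {w} \<noteq> {}"
proof
  assume "M - {w} = {}"
  then have "card M \<le> card {w}" by (intro card_mono) auto
  with assms show False by simp
qed

locale symmetric_graph =
  fixes E :: "'a \<Rightarrow> 'a \<Rightarrow> bool"
  assumes sym: "symp E"
begin

lemma reach_sym: "reach E S x y \<Longrightarrow> reach E S y x"
  unfolding reach_def
proof (induction rule: rtranclp_induct)
  case (step y z)
  then have "(\<lambda>a b. a \<in> S \<and> b \<in> S \<and> E a b) z y" using sym by (auto dest: sympD)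
  then show ?case using step(3) by (rule converse_rtranclp_into_rtranclp)
qed simp

lemma connected_onI_hub:
  assumes "h \<in> S" and "\<And>x. x \<in> S \<Longrightarrow> reach E S x h"
  shows "connected_on E S"
  unfolding connected_on_iff_reach
proof (intro conjI ballI)
  show "S \<noteq> {}" using assms(1) by blast
  fix x y assume "x \<in> S" "y \<in> S"
  with assms(2) have "reach E S x h" "reach E S h y" by (auto intro: reach_sym)
  then show "reach E S x y" by (rule reach_trans)
qed

lemma connected_on_Un:
  assumes "connected_on E A" and "connected_on E B" and "h \<in> A \<inter> B"
  shows "connected_on E (A \<union> B)"
proof (rule connected_onI_hub)
  show "h \<in> A \<union> B" using assms(3) by blast
  fix x assume "x \<in> A \<union> B"
  with assms have "reach E A x h \<or> reach E B x h" unfolding connected_on_iff_reach by blast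
  then show "reach E (A \<union> B) x h" by (auto elim: reach_mono)
qed

lemma connected_on_Un_edge:
  assumes "connected_on E A" and "connected_on E B" and "a \<in> A" and "b \<in> B" and "E a b"
  shows "connected_on E (A \<union> B)"
proof -
  have "reach E {a, b} a b" using assms(5) by (intro reach_edge) auto
  then have "connected_on E {a, b}" by (intro connected_onI_hub[of b]) (auto intro: reach_sym)
  then have "connected_on E ({a, b} \<union> B)"
    by (rule connected_on_Un[OF _ assms(2)]) (use assms(4) in blast)
  then have "connected_on E (A \<union> ({a, b} \<union> B))"
    by (rule connected_on_Un[OF assms(1)]) (use assms(3) in blast)
  moreover have "A \<union> ({a, b} \<union> B) = A \<union> B" using assms(3,4) by blast
  ultimately show ?thesis by simp
qed

lemma component_eq:
  assumes "y \<in> component E S x"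
  shows "component E S y = component E S x"
proof -
  have "reach E S x y" "reach E S y x"
    using assms unfolding component_def by (auto intro: reach_sym)
  then show ?thesis unfolding component_def by (blast intro: reach_trans)
qed

lemma reach_in_component: "reach E S x y \<Longrightarrow> reach E (component E S x) x y"
  unfolding reach_def
proof (induction rule: rtranclp_induct)
  case (step y z)
  then have "y \<in> component E S x" "z \<in> component E S x"
    unfolding component_def reach_def by (auto intro: rtranclp.rtrancl_into_rtrancl)
  with step show ?case by (auto intro: rtranclp.rtrancl_into_rtrancl)
qed simp

lemma connected_component: "connected_on E (component E S x)"
proof (rule connected_onI_hub)
  show "x \<in> component E S x" by (rule in_component_self)
  fix y assume "y \<in> component E S x"
  then have "reach E S x y" unfolding component_def by simp
  then show "reach E (component E S x) y x" by (rule reach_sym[OF reach_in_component])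
qed

lemma connected_subset_component:
  assumes "connected_on E C" and "C \<subseteq> S" and "u \<in> C" and "u \<in> component E S x"
  shows "C \<subseteq> component E S x"
proof
  fix z assume "z \<in> C"
  with assms(1,3) have "reach E C u z" unfolding connected_on_iff_reach by blast
  then have "reach E S u z" using assms(2) by (rule reach_mono)
  with assms(4) show "z \<in> component E S x" unfolding component_def by (auto intro: reach_trans)
qed

lemma component_restrict:
  assumes "component E S u \<subseteq> T" and "T \<subseteq> S"
  shows "component E T u = component E S u"
proof
  show "component E T u \<subseteq> component E S u"
    using assms(2) unfolding component_def by (auto elim: reach_mono)
  show "component E S u \<subseteq> component E T u"
  proof
    fix z assume "z \<in> component E S u"
    then have "reach E S u z" unfolding component_def by simp
    then have "reach E (component E S u) u z" by (rule reach_in_component)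
    then show "z \<in> component E T u" using assms(1) unfolding component_def by (simp add: reach_mono)
  qed
qed

lemma component_Diff_component:
  assumes "y \<notin> component E S c"
  shows "component E (S - component E S c) y = component E S y"
proof
  show "component E (S - component E S c) y \<subseteq> component E S y"
    unfolding component_def by (auto elim: reach_mono)
  have "z \<notin> component E S c" if "reach E S y z" for z
    using that assms unfolding component_def by (auto intro: reach_sym reach_trans)
  then show "component E S y \<subseteq> component E (S - component E S c) y"
    unfolding component_def by (auto intro: reach_avoid)
qed

lemma components_Diff_component:
  "component E (S - component E S c) ` (S - component E S c)
    = component E S ` S - {component E S c}"
proof (intro set_eqI iffI)
  fix C assume "C \<in> component E (S - component E S c) ` (S - component E S c)"
  then obtain y where y: "y \<in> S" "y \<notin> component E S c" "C = component E (S - component E S c) y"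
    by blast
  then have "C = component E S y" by (simp add: component_Diff_component)
  with y(1,2) in_component_self show "C \<in> component E S ` S - {component E S c}" by fast
next
  fix C assume "C \<in> component E S ` S - {component E S c}"
  then obtain y where "y \<in> S" "C = component E S y" "y \<notin> component E S c"
    using component_eq by blast
  then show "C \<in> component E (S - component E S c) ` (S - component E S c)"
    using component_Diff_component by auto
qed

lemma num_components_Diff_component:
  assumes "finite S" and "c \<in> S"
  shows "num_components E (S - component E S c) = num_components E S - 1"
  using assms unfolding num_components_def components_Diff_component by simp

lemma connected_Diff_component:
  assumes "connected_on E A" and "v \<in> A" and "y \<in> A - {v}"
  shows "connected_on E (A - component E (A - {v}) y)" (is "connected_on E (A - ?C)")
proof (rule connected_onI_hub)
  have "?C \<subseteq> A - {v}" using assms(3) by (rule component_subset)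
  then show "v \<in> A - ?C" using assms(2) by blast
  fix z assume z: "z \<in> A - ?C"
  show "reach E (A - ?C) z v"
  proof (cases "z = v")
    case False
    with z have "z \<in> A - {v}" "z \<notin> ?C" by auto
    then obtain u where u: "u \<in> component E (A - {v}) z" "E u v"
      using neighbor_in_component[OF assms(1,2)] by blast
    have "component E (A - {v} - ?C) z = component E (A - {v}) z"
      using \<open>z \<notin> ?C\<close> by (rule component_Diff_component)
    with u(1) have "reach E (A - {v} - ?C) z u" unfolding component_def by blast
    then have "reach E (A - ?C) z u" "u \<in> A - ?C"
      using \<open>z \<in> A - {v}\<close> \<open>z \<notin> ?C\<close> by (auto elim: reach_mono dest: reach_in)
    with u(2) \<open>v \<in> A - ?C\<close> show ?thesis by (blast intro: reach_trans reach_edge)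
  qed simp
qed

section \<open>Non-separating vertices\<close>

lemma component_Diff_psubset:
  assumes "connected_on E M" and "x \<in> M - {c}" and "w \<in> component E (M - {c}) x"
    and "z \<in> M - {w}" and "\<not> reach E (M - {w}) z c"
  shows "component E (M - {w}) z \<subset> component E (M - {c}) x"
proof -
  let ?Z = "component E (M - {w}) z" and ?K = "component E (M - {c}) x"
  have wK: "w \<in> M - {c}" using component_subset[OF assms(2)] assms(3) by blast
  have "reach E M z w" using assms(1,4) wK unfolding connected_on_iff_reach by blast
  with assms(4) obtain u where u: "reach E (M - {w}) z u" "E u w" by (auto dest: reach_last_edge)
  have Z: "?Z \<subseteq> M - {w}" using assms(4) by (rule component_subset)
  moreover have "c \<notin> ?Z" using assms(5) unfolding component_def by simp
  ultimately have ZK: "?Z \<subseteq> M - {c}" using Z by blast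
  have uZ: "u \<in> ?Z" using u(1) unfolding component_def by simp
  then have "reach E (M - {c}) w u" using ZK u(2) wK sym by (auto intro: reach_edge dest: sympD)
  with assms(3) have "u \<in> ?K" unfolding component_def by (auto intro: reach_trans)
  then have "?Z \<subseteq> ?K"
    using connected_component ZK uZ by (rule connected_subset_component[rotated 3])
  moreover have "w \<notin> ?Z" using Z by blast
  ultimately show ?thesis using assms(3) by blast
qed

text \<open>Minimise the component of \<open>x\<close> in \<open>M - {c}\<close>: a separating vertex inside it would
  yield a strictly smaller component.\<close>

lemma ex_component_of_nonseparating:
  assumes "finite M" and "connected_on E M" and "2 \<le> card M"
  shows "\<exists>c x. x \<in> M - {c} \<and> (\<forall>w\<in>component E (M - {c}) x. connected_on E (M - {w}))"
proof -
  let ?P = "\<lambda>(c, x). c \<in> M \<and> x \<in> M - {c}"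
  let ?m = "\<lambda>(c, x). card (component E (M - {c}) x)"
  obtain c0 where "c0 \<in> M" using assms(3) by fastforce
  moreover obtain x0 where "x0 \<in> M - {c0}" using Diff_singleton_nonempty[OF assms(3)] by blast
  ultimately obtain p where "?P p" and p_min: "\<And>q. ?P q \<Longrightarrow> ?m p \<le> ?m q"
    using ex_has_least_nat[of ?P "(c0, x0)" ?m] by auto
  then obtain c x where cx: "c \<in> M" "x \<in> M - {c}" and "p = (c, x)" by (cases p) auto
  with p_min have min: "\<And>c' x'. c' \<in> M \<Longrightarrow> x' \<in> M - {c'} \<Longrightarrow>
      card (component E (M - {c}) x) \<le> card (component E (M - {c'}) x')"
    by fastforce
  have "connected_on E (M - {w})" if wK: "w \<in> component E (M - {c}) x" for w
  proof (rule ccontr)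
    assume disconnected: "\<not> connected_on E (M - {w})"
    have wM: "w \<in> M - {c}" using component_subset[OF cx(2)] wK by blast
    from disconnected Diff_singleton_nonempty[OF assms(3)]
    obtain p q where pq: "p \<in> M - {w}" "q \<in> M - {w}" "\<not> reach E (M - {w}) p q"
      unfolding connected_on_iff_reach by blast
    obtain z where z: "z \<in> M - {w}" "\<not> reach E (M - {w}) z c"
    proof -
      have "\<not> (reach E (M - {w}) p c \<and> reach E (M - {w}) q c)"
        using pq(3) reach_trans[OF _ reach_sym] by blast
      with pq(1,2) that show thesis by blast
    qed
    have "component E (M - {w}) z \<subset> component E (M - {c}) x"
      using component_Diff_psubset[OF assms(2) cx(2) wK z] .
    moreover have "finite (component E (M - {c}) x)"
      using assms(1) cx(2) by (meson component_subset finite_Diff finite_subset)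
    ultimately have "card (component E (M - {w}) z) < card (component E (M - {c}) x)"
      by (rule psubset_card_mono[rotated])
    with min[of w z] wM z(1) show False by simp
  qed
  with cx(2) show ?thesis by blast
qed

section \<open>Counting vertices that split their component\<close>

lemma card_components_insert_le:
  assumes "finite T"
  shows "card (component E (insert w T) ` T) \<le> num_components E T"
  unfolding num_components_def
proof (rule card_image_le_if_factors[OF assms])
  fix y y' assume "component E T y = component E T y'"
  then have "reach E T y y'" using in_component_self unfolding component_def by fast
  then have "y' \<in> component E (insert w T) y" unfolding component_def by (auto elim: reach_mono)
  then show "component E (insert w T) y = component E (insert w T) y'" by (simp add: component_eq)
qed

lemma num_components_insert_le:
  assumes "finite T"
  shows "num_components E (insert w T) \<le> num_components E T + 1"
proof -
  have "num_components E (insert w T) \<le> card (component E (insert w T) ` T) + 1"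
    unfolding num_components_def using assms by (simp add: card_insert_if)
  with card_components_insert_le[OF assms, where w=w] show ?thesis by simp
qed

lemma num_components_insert_neighbor:
  assumes "finite T" and "u \<in> T" and "E w u"
  shows "num_components E (insert w T) \<le> num_components E T"
proof -
  have "u \<in> component E (insert w T) w"
    using assms(2,3) unfolding component_def by (auto intro: reach_edge)
  then have "component E (insert w T) w \<in> component E (insert w T) ` T"
    using assms(2) component_eq by (metis image_eqI)
  then have "component E (insert w T) ` insert w T = component E (insert w T) ` T" by auto
  with card_components_insert_le[OF assms(1), where w=w] show ?thesis
    unfolding num_components_def by simp
qed

lemma num_components_insert_Diff_le:
  assumes "finite T" and "u \<in> T" and "E w u"
  shows "num_components E (insert w (T - {v}))
    \<le> num_components E (T - {v}) + (if v = u then 1 else 0)"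
  using assms num_components_insert_le[of "T - {v}" w]
    num_components_insert_neighbor[of "T - {v}" u w]
  by auto

text \<open>Induction by deleting a non-separating vertex \<open>x\<close>: this changes the number of components
  of \<open>M - {v}\<close> only for one neighbour \<open>v\<close> of \<open>x\<close>, and only by one.\<close>

lemma sum_num_components_Diff_le:
  assumes "finite M" and "connected_on E M"
  shows "(\<Sum>v\<in>M. int (num_components E (M - {v})) - 1) \<le> int (card M) - 2"
  using assms
proof (induction "card M" arbitrary: M rule: less_induct)
  case less
  show ?case
  proof (cases "card M \<le> 1")
    case True
    moreover have "card M \<noteq> 0" using less.prems unfolding connected_on_def by simp
    ultimately have "card M = 1" by linarith
    then obtain x where "M = {x}" by (rule card_1_singletonE)
    then show ?thesis by simp
  next
    case False
    then obtain c x where "x \<in> M - {c}" "\<forall>w\<in>component E (M - {c}) x. connected_on E (M - {w})"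
      using ex_component_of_nonseparating[OF less.prems] by fastforce
    then have w: "x \<in> M" "connected_on E (M - {x})" using in_component_self by fast+
    define M' where "M' = M - {x}"
    have M': "finite M'" "card M' < card M" "connected_on E M'"
      using less.prems w card_Diff1_less[OF less.prems(1) w(1)] unfolding M'_def by auto
    then obtain y where y: "y \<in> M'" unfolding connected_on_def by blast
    then obtain u where "u \<in> component E M' y" "E u x"
      using neighbor_in_component[OF less.prems(2) w(1)] unfolding M'_def by blast
    then have u: "u \<in> M'" "E x u" using component_subset[OF y] sym by (auto dest: sympD)
    have step: "int (num_components E (M - {v})) - 1
        \<le> int (num_components E (M' - {v})) - 1 + (if v = u then 1 else 0)" if "v \<in> M'" for v
    proof -
      have "M - {v} = insert x (M' - {v})" using that w(1) unfolding M'_def by blast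
      then show ?thesis
        using num_components_insert_Diff_le[OF M'(1) u, of v] by (cases "v = u") simp_all
    qed
    have "(\<Sum>v\<in>M. int (num_components E (M - {v})) - 1)
        = (\<Sum>v\<in>M'. int (num_components E (M - {v})) - 1)"
      using less.prems(1) w unfolding M'_def by (simp add: sum.remove num_components_connected)
    also have "\<dots> \<le> (\<Sum>v\<in>M'. int (num_components E (M' - {v})) - 1 + (if v = u then 1 else 0))"
      by (rule sum_mono) (rule step)
    also have "\<dots> = (\<Sum>v\<in>M'. int (num_components E (M' - {v})) - 1) + 1"
      using M'(1) u(1) by (simp add: sum.distrib)
    also have "\<dots> \<le> int (card M') - 2 + 1" using less.hyps[OF M'(2,1,3)] by simp
    also have "\<dots> = int (card M) - 2"
      using card_Suc_Diff1[OF less.prems(1) w(1)] unfolding M'_def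
      by simp
    finally show ?thesis .
  qed
qed

end

definition three_way_cuts :: "('a \<Rightarrow> 'a \<Rightarrow> bool) \<Rightarrow> 'a set \<Rightarrow> 'a set" where
  "three_way_cuts E S = {v\<in>S. 3 \<le> num_components E (component E S v - {v})}"

definition expensive_vertices :: "('a \<Rightarrow> 'a \<Rightarrow> bool) \<Rightarrow> 'a set set \<Rightarrow> 'a set" where
  "expensive_vertices E P = {v. \<exists>A\<in>P. v \<in> A \<and> 4 \<le> num_components E (A - {v})}"

context symmetric_graph
begin

lemma card_three_way_cuts_connected:
  assumes "finite S" and "connected_on E S"
  shows "2 * card (three_way_cuts E S) < card S"
proof -
  let ?T = "three_way_cuts E S"
  have T: "?T = {v\<in>S. 3 \<le> num_components E (S - {v})}"
    unfolding three_way_cuts_def using component_eq_if_connected[OF assms(2)] by auto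
  show ?thesis
  proof (cases "2 \<le> card S")
    case False
    moreover have "card S \<noteq> 0" using assms unfolding connected_on_def by simp
    ultimately have "card S = 1" by linarith
    then obtain x where "S = {x}" by (rule card_1_singletonE)
    then show ?thesis using T by simp
  next
    case True
    have pos: "0 \<le> int (num_components E (S - {v})) - 1" for v
      using num_components_pos[of "S - {v}" E] Diff_singleton_nonempty[OF True] assms(1) by simp
    have "int (2 * card ?T) = (\<Sum>v\<in>?T. 2)" by simp
    also have "\<dots> \<le> (\<Sum>v\<in>?T. int (num_components E (S - {v})) - 1)"
      by (rule sum_mono) (simp add: T)
    also have "\<dots> \<le> (\<Sum>v\<in>S. int (num_components E (S - {v})) - 1)"
      using assms(1) pos by (intro sum_mono2) (auto simp: T)
    also have "\<dots> \<le> int (card S) - 2" using assms by (rule sum_num_components_Diff_le)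
    finally show ?thesis by simp
  qed
qed

lemma three_way_cuts_subset:
  "three_way_cuts E S \<subseteq> three_way_cuts E (component E S c) \<union> three_way_cuts E (S - component E S c)"
proof
  fix v assume v: "v \<in> three_way_cuts E S"
  show "v \<in> three_way_cuts E (component E S c) \<union> three_way_cuts E (S - component E S c)"
  proof (cases "v \<in> component E S c")
    case True
    then have "component E (component E S c) v = component E S v"
      using component_eq_if_connected[OF connected_component] component_eq by metis
    with v True show ?thesis unfolding three_way_cuts_def by auto
  next
    case False
    with v show ?thesis unfolding three_way_cuts_def by (auto simp: component_Diff_component)
  qed
qed

lemma card_three_way_cuts:
  assumes "finite S" and "S \<noteq> {}"
  shows "2 * card (three_way_cuts E S) < card S"
  using assms
proof (induction "card S" arbitrary: S rule: less_induct)
  case less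
  then obtain x where x: "x \<in> S" by blast
  let ?C = "component E S x"
  show ?case
  proof (cases "?C = S")
    case True
    with less.prems connected_component show ?thesis by (metis card_three_way_cuts_connected)
  next
    case False
    let ?R = "S - ?C"
    have CS: "?C \<subseteq> S" using x by (rule component_subset)
    then have fin: "finite ?C" "finite ?R" using less.prems(1) by (auto intro: finite_subset)
    have ne: "?C \<noteq> {}" "?R \<noteq> {}" using in_component_self[of x E S] CS False by blast+
    have "card ?R = card S - card ?C" using fin(1) CS by (rule card_Diff_subset)
    moreover have "card ?C \<le> card S" using less.prems(1) CS by (rule card_mono)
    ultimately have card_S: "card S = card ?C + card ?R" by simp
    then have "card ?C < card S" "card ?R < card S" using fin ne by auto
    then have IH: "2 * card (three_way_cuts E ?C) < card ?C"
      "2 * card (three_way_cuts E ?R) < card ?R"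
      using less.hyps fin ne by blast+
    have "card (three_way_cuts E S) \<le> card (three_way_cuts E ?C \<union> three_way_cuts E ?R)"
      using fin three_way_cuts_subset by (intro card_mono) (auto simp: three_way_cuts_def)
    also have "\<dots> \<le> card (three_way_cuts E ?C) + card (three_way_cuts E ?R)" by (rule card_Un_le)
    finally show ?thesis using IH card_S by simp
  qed
qed

lemma card_three_way_cuts_le:
  assumes "finite S"
  shows "2 * card (three_way_cuts E S) \<le> card S"
  using card_three_way_cuts[OF assms] by (cases "S = {}") (auto simp: three_way_cuts_def)

lemma component_Diff_mem_components_restrict:
  assumes "connected_on E A" and "v \<in> A" and "x \<in> T" and "v \<in> component E T x"
    and "A - {c} \<subseteq> T" and y: "y \<in> A - {v}" "c \<notin> component E (A - {v}) y"
  defines "M \<equiv> component E (A \<inter> component E T x) v"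
  shows "component E (A - {v}) y \<in> component E (M - {v}) ` (M - {v})"
proof -
  let ?K = "component E T x" and ?C = "component E (A - {v}) y"
  have vK: "v \<in> A \<inter> ?K" and KT: "?K \<subseteq> T" using assms(2-4) component_subset[OF assms(3)] by auto
  have MA: "M \<subseteq> A \<inter> ?K" unfolding M_def using vK by (rule component_subset)
  obtain u where u: "u \<in> ?C" "E v u"
    using neighbor_in_component[OF assms(1,2) y(1)] sym by (auto dest: sympD)
  have CA: "?C \<subseteq> A - {v}" using y(1) by (rule component_subset)
  have "reach E T v u" using u CA y(2) assms(5) vK KT by (intro reach_edge) auto
  then have uK: "u \<in> ?K" using vK by (auto simp: in_component_iff intro: reach_trans)
  then have "reach E (A \<inter> ?K) v u" using vK u CA by (intro reach_edge) auto
  then have uM: "u \<in> M" unfolding M_def by (simp add: in_component_iff)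
  have "?C \<subseteq> T" using CA y(2) assms(5) by blast
  then have "?C \<subseteq> ?K" using connected_component u(1) uK by (intro connected_subset_component)
  then have "?C \<subseteq> A \<inter> ?K" using CA by blast
  then have "?C \<subseteq> M"
    using connected_component u(1) uM unfolding M_def by (intro connected_subset_component)
  then have CM: "?C \<subseteq> M - {v}" using CA by blast
  have uC: "component E (A - {v}) u = ?C" using u(1) by (rule component_eq)
  have "component E (M - {v}) u = component E (A - {v}) u"
    by (rule component_restrict) (use CM MA uC in auto)
  with uC CM u(1) show ?thesis by blast
qed

text \<open>At most one component of \<open>A - {v}\<close> contains \<open>c\<close>; all the others lie inside the
  component of \<open>T\<close> containing \<open>v\<close>.\<close>

lemma num_components_Diff_le_restrict:
  assumes "finite A" and "connected_on E A" and "v \<in> A"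
    and "x \<in> T" and "v \<in> component E T x" and "A - {c} \<subseteq> T"
  shows "num_components E (A - {v})
    \<le> num_components E (component E (A \<inter> component E T x) v - {v}) + 1"
proof -
  let ?M = "component E (A \<inter> component E T x) v"
  let ?F = "{C \<in> component E (A - {v}) ` (A - {v}). c \<notin> C}"
  have "?F \<subseteq> component E (?M - {v}) ` (?M - {v})"
    using component_Diff_mem_components_restrict[OF assms(2-6)] by blast
  moreover have "?M \<subseteq> A"
    using assms(3-5) component_subset[OF assms(4)] component_subset[of v] by blast
  then have "finite (?M - {v})" using assms(1) by (auto intro: finite_subset)
  ultimately have F: "card ?F \<le> num_components E (?M - {v})"
    unfolding num_components_def by (intro card_mono) auto
  have "component E (A - {v}) ` (A - {v}) \<subseteq> insert (component E (A - {v}) c) ?F"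
    using component_eq by blast
  then have "num_components E (A - {v}) \<le> card (insert (component E (A - {v}) c) ?F)"
    unfolding num_components_def using assms(1) by (intro card_mono) auto
  also have "\<dots> \<le> card ?F + 1" using assms(1) by (simp add: card_insert_if)
  finally show ?thesis using F by simp
qed

lemma expensive_vertices_subset_three_way_cuts:
  assumes "finite V" and P: "conn_partition V E k P" and x: "x \<in> V - {c}"
  shows "component E (V - {c}) x \<inter> expensive_vertices E P
    \<subseteq> (\<Union>A\<in>P. three_way_cuts E (A \<inter> component E (V - {c}) x))"
proof
  let ?K = "component E (V - {c}) x"
  fix v assume "v \<in> ?K \<inter> expensive_vertices E P"
  then obtain A where A: "A \<in> P" "v \<in> A" "4 \<le> num_components E (A - {v})" and vK: "v \<in> ?K"
    unfolding expensive_vertices_def by blast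
  have "A \<subseteq> V" "connected_on E A" using A(1) P unfolding conn_partition_def by auto
  then have "num_components E (A - {v}) \<le> num_components E (component E (A \<inter> ?K) v - {v}) + 1"
    using num_components_Diff_le_restrict[OF _ _ A(2) x vK] assms(1) by (auto intro: finite_subset)
  with A vK show "v \<in> (\<Union>A\<in>P. three_way_cuts E (A \<inter> ?K))" unfolding three_way_cuts_def by auto
qed

lemma card_expensive_vertices:
  assumes "finite V" and P: "conn_partition V E k P" and x: "x \<in> V - {c}"
  shows "2 * card (component E (V - {c}) x \<inter> expensive_vertices E P)
    < card (component E (V - {c}) x)"
proof -
  let ?K = "component E (V - {c}) x"
  have K: "?K \<subseteq> V - {c}" "finite ?K"
    using component_subset[OF x] assms(1) by (auto intro: finite_subset)
  have finP: "finite P" and cover: "\<Union>P = V"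
    and disj: "\<And>A B. A \<in> P \<Longrightarrow> B \<in> P \<Longrightarrow> A \<noteq> B \<Longrightarrow> A \<inter> B = {}"
    using P unfolding conn_partition_def by auto
  have "card (?K \<inter> expensive_vertices E P) \<le> card (\<Union>A\<in>P. three_way_cuts E (A \<inter> ?K))"
    using expensive_vertices_subset_three_way_cuts[OF assms] finP K(2)
    by (intro card_mono) (auto simp: three_way_cuts_def)
  also have "\<dots> \<le> (\<Sum>A\<in>P. card (three_way_cuts E (A \<inter> ?K)))" using finP by (rule card_UN_le)
  finally have "2 * card (?K \<inter> expensive_vertices E P)
      \<le> (\<Sum>A\<in>P. 2 * card (three_way_cuts E (A \<inter> ?K)))"
    by (simp add: sum_distrib_left[symmetric])
  also have "\<dots> < (\<Sum>A\<in>P. card (A \<inter> ?K))"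
  proof (rule sum_strict_mono_ex1[OF finP])
    show "\<forall>A\<in>P. 2 * card (three_way_cuts E (A \<inter> ?K)) \<le> card (A \<inter> ?K)"
      using card_three_way_cuts_le K(2) by simp
    obtain A where "A \<in> P" "x \<in> A" using cover x by blast
    moreover have "x \<in> ?K" by (rule in_component_self)
    ultimately show "\<exists>A\<in>P. 2 * card (three_way_cuts E (A \<inter> ?K)) < card (A \<inter> ?K)"
      using card_three_way_cuts K(2) by blast
  qed
  also have "\<dots> = card (\<Union>A\<in>P. A \<inter> ?K)"
    using finP K(2) disj by (intro card_UN_disjoint[symmetric]) auto
  also have "(\<Union>A\<in>P. A \<inter> ?K) = ?K" using cover K(1) by blast
  finally show ?thesis .
qed

end

section \<open>Recombination moves\<close>

lemma conn_partition_other_district: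
  assumes "conn_partition V E k P" and "2 \<le> k" and "A \<in> P"
  shows "\<exists>D\<in>P. D \<noteq> A"
proof (rule ccontr)
  assume "\<not> (\<exists>D\<in>P. D \<noteq> A)"
  then have "card P \<le> card {A}"
    using assms(1) unfolding conn_partition_def by (intro card_mono) auto
  with assms(1,2) show False unfolding conn_partition_def by simp
qed

lemma two_le_card_if_conn_partition:
  assumes "finite V" and "conn_partition V E k P" and "2 \<le> k"
  shows "2 \<le> card V"
proof -
  have P: "\<Union>P = V" "\<And>A B. A \<in> P \<Longrightarrow> B \<in> P \<Longrightarrow> A \<noteq> B \<Longrightarrow> A \<inter> B = {}"
    "\<And>A. A \<in> P \<Longrightarrow> A \<noteq> {}"
    using assms(2) unfolding conn_partition_def by auto
  have "P \<noteq> {}" using assms(2,3) unfolding conn_partition_def by auto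
  then obtain A where A: "A \<in> P" by blast
  then obtain D where D: "D \<in> P" "D \<noteq> A" using conn_partition_other_district[OF assms(2,3)] by blast
  obtain p q where "p \<in> A" "q \<in> D" using P(3) A D(1) by blast
  with P A D have "p \<noteq> q" "p \<in> V" "q \<in> V" by blast+
  then have "card {p, q} \<le> card V" using assms(1) by (intro card_mono) auto
  with \<open>p \<noteq> q\<close> show ?thesis by simp
qed

lemma conn_partition_resplit:
  assumes P: "conn_partition V E k P" and AD: "A \<in> P" "D \<in> P" "A \<noteq> D"
    and con: "connected_on E A'" "connected_on E D'" and "A' \<inter> D' = {}" and "A' \<union> D' = A \<union> D"
  shows "conn_partition V E k (insert A' (insert D' (P - {A, D})))"
    and "A' \<notin> P - {A, D}" and "D' \<notin> P - {A, D}"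
proof -
  let ?R = "P - {A, D}"
  have disj: "X \<inter> (A \<union> D) = {}" if "X \<in> ?R" for X
    using that AD P unfolding conn_partition_def by blast
  have ne: "A' \<noteq> {}" "D' \<noteq> {}" using con unfolding connected_on_def by auto
  with disj assms(8) show new: "A' \<notin> ?R" "D' \<notin> ?R" by blast+
  have "A' \<noteq> D'" using ne assms(7) by blast
  moreover have "card ?R + 2 = card P"
    using AD P card_mono[of P "{A, D}"] unfolding conn_partition_def by (simp add: card_Diff_subset)
  ultimately have "card (insert A' (insert D' ?R)) = card P"
    using new P unfolding conn_partition_def by simp
  moreover have "\<Union>(insert A' (insert D' ?R)) = \<Union>P" using AD assms(8) by blast
  moreover have "X \<inter> Y = {}"
    if "X \<in> insert A' (insert D' ?R)" "Y \<in> insert A' (insert D' ?R)" "X \<noteq> Y" for X Y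
  proof -
    have sub: "A' \<subseteq> A \<union> D" "D' \<subseteq> A \<union> D" using assms(8) by blast+
    from that(1,2) consider "X \<in> ?R" "Y \<in> ?R" | "X \<in> {A', D'}" "Y \<in> {A', D'}"
      | "X \<in> {A', D'}" "Y \<in> ?R" | "X \<in> ?R" "Y \<in> {A', D'}" by blast
    then show ?thesis
    proof cases
      case 1 with that(3) P show ?thesis unfolding conn_partition_def by blast
    next
      case 2 with that(3) assms(7) show ?thesis by blast
    next
      case 3 with disj[of Y] sub show ?thesis by blast
    next
      case 4 with disj[of X] sub show ?thesis by blast
    qed
  qed
  ultimately show "conn_partition V E k (insert A' (insert D' ?R))"
    using P con ne unfolding conn_partition_def by auto
qed

lemma recomb_move_resplit:
  assumes P: "conn_partition V E k P" and AD: "A \<in> P" "D \<in> P" "A \<noteq> D"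
    and "connected_on E A'" "connected_on E D'" and "A' \<inter> D' = {}" and "A' \<union> D' = A \<union> D"
    and "A' \<notin> {A, D}"
  shows "recomb_move V E k P (insert A' (insert D' (P - {A, D})))"
proof -
  let ?Q = "insert A' (insert D' (P - {A, D}))"
  note resplit = conn_partition_resplit[OF assms(1-8)]
  have ne: "A' \<noteq> D'" using assms(5,7) unfolding connected_on_def by blast
  have rest: "P - {A, D} = ?Q - {A', D'}" using resplit(2,3) by blast
  have "\<exists>A0\<in>P. \<exists>B0\<in>P. \<exists>C0\<in>?Q. \<exists>D0\<in>?Q.
      A0 \<noteq> B0 \<and> C0 \<noteq> D0 \<and> A0 \<union> B0 = C0 \<union> D0 \<and> P - {A0, B0} = ?Q - {C0, D0}"
    by (rule bexI[of _ A], rule bexI[of _ D], rule bexI[of _ A'], rule bexI[of _ D'])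
      (use AD assms(8) ne rest in auto)
  moreover have "A' \<notin> P" using resplit(2) assms(9) by blast
  then have "P \<noteq> ?Q" using insertI1[of A' "insert D' (P - {A, D})"] by metis
  ultimately show ?thesis unfolding recomb_move_def using P resplit(1) by blast
qed

context symmetric_graph
begin

lemma recomb_move_detach_component:
  assumes "connected_on E (V - {v})" and P: "conn_partition V E k P" and "2 \<le> k"
    and A: "A \<in> P" "v \<in> A" and y: "y \<in> A - {v}"
  shows "\<exists>Q. recomb_move V E k P Q \<and> A - component E (A - {v}) y \<in> Q"
proof -
  let ?C = "component E (A - {v}) y"
  have CA: "?C \<subseteq> A - {v}" using y by (rule component_subset)
  have partition: "\<Union>P = V" "\<And>X Y. X \<in> P \<Longrightarrow> Y \<in> P \<Longrightarrow> X \<noteq> Y \<Longrightarrow> X \<inter> Y = {}"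
    "\<And>X. X \<in> P \<Longrightarrow> connected_on E X"
    using P unfolding conn_partition_def by auto
  obtain D0 where "D0 \<in> P" "D0 \<noteq> A" using conn_partition_other_district[OF P assms(3) A(1)] by blast
  moreover obtain d where "d \<in> D0" using \<open>D0 \<in> P\<close> partition(3) unfolding connected_on_def by blast
  ultimately have d: "d \<in> V - {v}" "d \<notin> A" using partition(1) partition(2)[of D0 A] A by blast+
  have "y \<in> V - {v}" using y A(1) partition(1) by blast
  with assms(1) d(1) have "reach E (V - {v}) y d" unfolding connected_on_iff_reach by blast
  moreover have "y \<in> ?C" by (rule in_component_self)
  moreover have "d \<notin> ?C" using d(2) CA by blast
  ultimately obtain a b where ab: "a \<in> ?C" "b \<notin> ?C" "b \<in> V - {v}" "E a b"
    by (blast dest: reach_crossing_edge)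
  have "b \<notin> A"
  proof
    assume "b \<in> A"
    then have "reach E (A - {v}) a b" using ab CA by (intro reach_edge) auto
    with ab(1,2) show False by (auto simp: in_component_iff intro: reach_trans)
  qed
  obtain D where D: "D \<in> P" "b \<in> D" using partition(1) ab(3) by blast
  with \<open>b \<notin> A\<close> have "A \<inter> D = {}" using partition(2) A(1) by blast
  have "recomb_move V E k P (insert (A - ?C) (insert (D \<union> ?C) (P - {A, D})))"
  proof (rule recomb_move_resplit[OF P A(1) D(1)])
    show "A \<noteq> D" using D(2) \<open>b \<notin> A\<close> by blast
    show "connected_on E (A - ?C)" using connected_Diff_component partition(3) A y by blast
    show "connected_on E (D \<union> ?C)"
      using connected_on_Un_edge[OF partition(3)[OF D(1)] connected_component D(2) ab(1)] ab(4) sym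
      by (auto dest: sympD)
    show "(A - ?C) \<inter> (D \<union> ?C) = {}" "A - ?C \<union> (D \<union> ?C) = A \<union> D"
      using \<open>A \<inter> D = {}\<close> CA by blast+
    show "A - ?C \<notin> {A, D}" using in_component_self[of y E "A - {v}"] y A(2) \<open>A \<inter> D = {}\<close> CA by blast
  qed
  then show ?thesis by blast
qed

lemma detach_vertex:
  assumes "finite V" and "connected_on E (V - {v})" and "2 \<le> k"
  shows "conn_partition V E k P \<Longrightarrow> A \<in> P \<Longrightarrow> v \<in> A \<Longrightarrow> \<exists>n Q. n \<le> num_components E (A - {v})
    \<and> (recomb_move V E k ^^ n) P Q \<and> conn_partition V E k Q \<and> {v} \<in> Q"
proof (induction "num_components E (A - {v})" arbitrary: P A)
  case 0
  have "finite (A - {v})"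
    using 0 assms(1) unfolding conn_partition_def by (auto intro: finite_subset)
  with 0 have "A = {v}" unfolding num_components_def by auto
  with 0 show ?case by (intro exI[of _ 0] exI[of _ P]) auto
next
  case (Suc m)
  have fin: "finite (A - {v})"
    using Suc assms(1) unfolding conn_partition_def by (auto intro: finite_subset)
  have "A - {v} \<noteq> {}" using Suc.hyps(2) by (metis num_components_empty nat.distinct(1))
  then obtain y where y: "y \<in> A - {v}" by blast
  let ?A' = "A - component E (A - {v}) y"
  obtain P' where move: "recomb_move V E k P P'" and A': "?A' \<in> P'"
    using recomb_move_detach_component[OF assms(2) Suc.prems(1) assms(3) Suc.prems(2,3) y] by blast
  have "?A' - {v} = (A - {v}) - component E (A - {v}) y" by blast
  then have "num_components E (?A' - {v}) = m"
    using num_components_Diff_component[OF fin y] Suc.hyps(2) by simp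
  moreover have "v \<in> ?A'" using component_subset[OF y] Suc.prems(3) by blast
  moreover have "conn_partition V E k P'" using move unfolding recomb_move_def by blast
  ultimately obtain n Q where "n \<le> m" and moves: "(recomb_move V E k ^^ n) P' Q"
    and "conn_partition V E k Q" "{v} \<in> Q"
    using Suc.hyps(1) A' by blast
  moreover have "(recomb_move V E k ^^ Suc n) P Q" using move moves by (rule relpowp_Suc_I2)
  ultimately show ?case using Suc.hyps(2) by (intro exI[of _ "Suc n"] exI[of _ Q]) auto
qed

lemma detach_vertex_in_three_moves:
  assumes "finite V" and "connected_on E (V - {v})" and "2 \<le> k"
    and "conn_partition V E k P" and "v \<in> V" and "v \<notin> expensive_vertices E P"
  shows "\<exists>n Q. n \<le> 3 \<and> (recomb_move V E k ^^ n) P Q \<and> conn_partition V E k Q \<and> {v} \<in> Q"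
proof -
  obtain A where A: "A \<in> P" "v \<in> A" using assms(4,5) unfolding conn_partition_def by blast
  with assms(6) have "num_components E (A - {v}) \<le> 3" unfolding expensive_vertices_def by auto
  with detach_vertex[OF assms(1-4) A] show ?thesis by (meson le_trans)
qed

end

section \<open>Block vertices\<close>

lemma nonseparable_Diff_connected:
  assumes "nonseparable V E B" and "u \<in> B" and "u \<noteq> y"
  shows "connected_on E (B - {y})"
proof (cases "y \<in> B")
  case True
  with assms show ?thesis unfolding nonseparable_def by blast
next
  case False
  with assms(1) show ?thesis unfolding nonseparable_def by simp
qed

lemma ex_minimal_connected_subset:
  assumes "finite S" and "connected_on E S" and "a \<in> S" and "b \<in> S"
  obtains W where "W \<subseteq> S" and "connected_on E W" and "a \<in> W" and "b \<in> W"
    and "\<And>W'. W' \<subset> W \<Longrightarrow> a \<in> W' \<Longrightarrow> b \<in> W' \<Longrightarrow> \<not> connected_on E W'"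
proof -
  let ?P = "\<lambda>W. W \<subseteq> S \<and> connected_on E W \<and> a \<in> W \<and> b \<in> W"
  obtain W where W: "?P W" and min: "\<And>W'. ?P W' \<Longrightarrow> card W \<le> card W'"
    using ex_has_least_nat[of ?P S card] assms by auto
  have "\<not> connected_on E W'" if "W' \<subset> W" "a \<in> W'" "b \<in> W'" for W'
  proof
    assume "connected_on E W'"
    with that W have "card W \<le> card W'" by (intro min) auto
    moreover have "card W' < card W"
      using that(1) finite_subset[OF _ assms(1)] W by (meson psubset_card_mono)
    ultimately show False by simp
  qed
  with W that show thesis by blast
qed

context symmetric_graph
begin

lemma nonseparable_edge:
  assumes "u \<in> V" and "w \<in> V" and "E u w" and "u \<noteq> w"
  shows "nonseparable V E {u, w}"
  unfolding nonseparable_def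
proof (intro conjI ballI impI)
  show "{u, w} \<subseteq> V" using assms(1,2) by blast
  have "reach E {u, w} w u" using assms(3) sym by (intro reach_edge) (auto dest: sympD)
  then show "connected_on E {u, w}" by (intro connected_onI_hub[of u]) auto
  fix x assume "x \<in> {u, w}"
  then have "{u, w} - {x} = {u} \<or> {u, w} - {x} = {w}" using assms(4) by blast
  then show "connected_on E ({u, w} - {x})" using connected_on_singleton by metis
qed

lemma minimal_connected_Diff_reach:
  assumes "connected_on E W" and "a \<in> W" and "b \<in> W"
    and minimal: "\<And>W'. W' \<subset> W \<Longrightarrow> a \<in> W' \<Longrightarrow> b \<in> W' \<Longrightarrow> \<not> connected_on E W'"
    and z: "z \<in> W - {y}"
  shows "\<exists>t\<in>{a, b}. t \<noteq> y \<and> reach E (W - {y}) z t"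
proof (cases "y \<in> W")
  case False
  with assms(1,2) z show ?thesis unfolding connected_on_iff_reach by auto
next
  case True
  let ?Z = "component E (W - {y}) z"
  show ?thesis
  proof (rule ccontr)
    assume none: "\<not> ?thesis"
    have sub: "?Z \<subseteq> W - {y}" using z by (rule component_subset)
    have "t \<notin> ?Z" if "t \<in> {a, b}" for t
    proof
      assume "t \<in> ?Z"
      then have "t \<noteq> y" "reach E (W - {y}) z t" using sub by (auto simp: in_component_iff)
      with none that show False by blast
    qed
    then have "a \<notin> ?Z" "b \<notin> ?Z" by auto
    moreover have "connected_on E (W - ?Z)" using assms(1) True z by (rule connected_Diff_component)
    moreover have "W - ?Z \<subset> W" using in_component_self[of z E "W - {y}"] z by blast
    ultimately show False using minimal assms(2,3) by blast
  qed
qed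

lemma nonseparable_Un_bridge:
  assumes B: "nonseparable V E B1" "nonseparable V E B2" "v \<in> B1" "v \<in> B2"
    and W: "connected_on E W" "W \<subseteq> V - {v}" "a \<in> W \<inter> B1" "b \<in> W \<inter> B2"
    and minimal: "\<And>W'. W' \<subset> W \<Longrightarrow> a \<in> W' \<Longrightarrow> b \<in> W' \<Longrightarrow> \<not> connected_on E W'"
  shows "nonseparable V E (B1 \<union> B2 \<union> W)"
  unfolding nonseparable_def
proof (intro conjI ballI impI)
  let ?U = "B1 \<union> B2 \<union> W"
  have con: "connected_on E B1" "connected_on E B2" and sub: "B1 \<subseteq> V" "B2 \<subseteq> V"
    using B(1,2) unfolding nonseparable_def by auto
  show "?U \<subseteq> V" using sub W(2) by blast
  have "connected_on E (B1 \<union> B2)" using con B(3,4) by (intro connected_on_Un[of _ _ v]) auto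
  then show "connected_on E ?U" by (rule connected_on_Un[OF _ W(1), where h=a]) (use W(3) in blast)
  fix y assume "y \<in> ?U"
  show "connected_on E (?U - {y})"
  proof (cases "y = v")
    case True
    have B1': "connected_on E (B1 - {v})" and B2': "connected_on E (B2 - {v})"
      using nonseparable_Diff_connected[OF B(1), of a] nonseparable_Diff_connected[OF B(2), of b]
        W(2-4)
      by auto
    have "connected_on E ((B1 - {v}) \<union> W)"
      by (rule connected_on_Un[OF B1' W(1), of a]) (use W(2,3) in blast)
    then have "connected_on E ((B1 - {v}) \<union> W \<union> (B2 - {v}))"
      by (rule connected_on_Un[OF _ B2', where h=b]) (use W(2,4) in blast)
    moreover have "?U - {y} = (B1 - {v}) \<union> W \<union> (B2 - {v})" using True W(2) by blast
    ultimately show ?thesis by simp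
  next
    case False
    let ?X = "(B1 - {y}) \<union> (B2 - {y})"
    have "connected_on E ?X"
      using nonseparable_Diff_connected[OF B(1,3)] nonseparable_Diff_connected[OF B(2,4)]
        B(3,4) False
      by (intro connected_on_Un[of _ _ v]) auto
    then have X: "reach E ?X z v" if "z \<in> ?X" for z
      using that B(3) False unfolding connected_on_iff_reach by blast
    show ?thesis
    proof (rule connected_onI_hub[of v])
      show "v \<in> ?U - {y}" using B(3) False by blast
      fix z assume z: "z \<in> ?U - {y}"
      show "reach E (?U - {y}) z v"
      proof (cases "z \<in> ?X")
        case True
        then have "reach E ?X z v" by (rule X)
        then show ?thesis by (rule reach_mono) blast
      next
        case False
        with z have "z \<in> W - {y}" by blast
        then obtain t where t: "t \<in> {a, b}" "t \<noteq> y" "reach E (W - {y}) z t"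
          using minimal_connected_Diff_reach[OF W(1) _ _ minimal] W(3,4) by blast
        then have "reach E (?U - {y}) z t" by (auto elim: reach_mono)
        moreover have "reach E (?U - {y}) t v"
          using X[of t] t(1,2) W(3,4) by (auto elim: reach_mono)
        ultimately show ?thesis by (rule reach_trans)
      qed
    qed
  qed
qed

lemma block_vertex_if_connected_Diff:
  assumes "finite V" and "connected_on E V" and "v \<in> V" and "connected_on E (V - {v})"
  shows "block_vertex V E v"
proof -
  have "\<not> cut_vertex V E v"
  proof
    assume "cut_vertex V E v"
    then obtain B1 B2 where "is_block V E B1" "is_block V E B2" and B: "B1 \<noteq> B2" "v \<in> B1" "v \<in> B2"
      unfolding cut_vertex_def by blast
    then have ns: "nonseparable V E B1" "nonseparable V E B2"
      and max1: "\<And>C. nonseparable V E C \<Longrightarrow> B1 \<subseteq> C \<Longrightarrow> C = B1"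
      and max2: "\<And>C. nonseparable V E C \<Longrightarrow> B2 \<subseteq> C \<Longrightarrow> C = B2"
      unfolding is_block_def by blast+
    have BV: "B1 \<subseteq> V" "B2 \<subseteq> V" using ns unfolding nonseparable_def by blast+
    obtain y where "y \<in> V - {v}" using assms(4) unfolding connected_on_def by blast
    then obtain u where "u \<in> component E (V - {v}) y" "E u v"
      using neighbor_in_component[OF assms(2,3)] by blast
    then have u: "u \<in> V - {v}" "E v u" using component_subset[of y "V - {v}" E] \<open>y \<in> V - {v}\<close> sym
      by (auto dest: sympD)
    have "B1 \<noteq> {v}"
    proof
      assume "B1 = {v}"
      then have "{v, u} = B1" using max1 nonseparable_edge[OF assms(3) _ u(2)] u(1) by blast
      with \<open>B1 = {v}\<close> u(1) show False by blast
    qed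
    with B(2) obtain a where a: "a \<in> B1 - {v}" by blast
    have "\<not> B2 \<subseteq> B1" using max2[OF ns(1)] B(1) by blast
    then obtain b where b: "b \<in> B2 - B1" by blast
    have ab: "a \<in> V - {v}" "b \<in> V - {v}" using a b B(2) BV by blast+
    have "finite (V - {v})" using assms(1) by simp
    then obtain W where W: "W \<subseteq> V - {v}" "connected_on E W" "a \<in> W" "b \<in> W"
      and minimal: "\<And>W'. W' \<subset> W \<Longrightarrow> a \<in> W' \<Longrightarrow> b \<in> W' \<Longrightarrow> \<not> connected_on E W'"
      using assms(4) ab by (rule ex_minimal_connected_subset) auto
    have "nonseparable V E (B1 \<union> B2 \<union> W)"
      using nonseparable_Un_bridge[OF ns B(2,3) W(2,1) _ _ minimal] W(3,4) a b by blast
    then have "B1 \<union> B2 \<union> W = B1" "B1 \<union> B2 \<union> W = B2" using max1 max2 by blast+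
    with B(1) show False by blast
  qed
  with assms(3) show ?thesis unfolding block_vertex_def by blast
qed

end

theorem mainTheorem2:
  fixes V :: "'a set" and E :: "'a \<Rightarrow> 'a \<Rightarrow> bool" and k :: nat and P1 P2 :: "'a set set"
  assumes "simple_graph V E" and "connected_on E V" and "k \<ge> 2"
    and "conn_partition V E k P1" and "conn_partition V E k P2"
  shows "\<exists>v. block_vertex V E v \<and>
    (\<exists>n Q1. n \<le> 3 \<and> (recomb_move V E k ^^ n) P1 Q1 \<and> conn_partition V E k Q1 \<and> {v} \<in> Q1) \<and>
    (\<exists>n Q2. n \<le> 3 \<and> (recomb_move V E k ^^ n) P2 Q2 \<and> conn_partition V E k Q2 \<and> {v} \<in> Q2)"
proof -
  have finite: "finite V" using assms(1) unfolding simple_graph_def by blast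
  interpret symmetric_graph E
    using assms(1) unfolding simple_graph_def by unfold_locales (auto intro: sympI)
  obtain c x where x: "x \<in> V - {c}"
    and nonsep: "\<forall>w\<in>component E (V - {c}) x. connected_on E (V - {w})"
    using ex_component_of_nonseparating[OF finite assms(2)]
      two_le_card_if_conn_partition[OF finite assms(4,3)]
    by blast
  let ?K = "component E (V - {c}) x"
  let ?X1 = "expensive_vertices E P1" and ?X2 = "expensive_vertices E P2"
  have "2 * card (?K \<inter> ?X1) < card ?K" "2 * card (?K \<inter> ?X2) < card ?K"
    using card_expensive_vertices[OF finite _ x] assms(4,5) by blast+
  moreover have "card ?K \<le> card (?K \<inter> ?X1) + card (?K \<inter> ?X2)" if "?K \<subseteq> ?X1 \<union> ?X2"
    using card_Un_le[of "?K \<inter> ?X1" "?K \<inter> ?X2"] that by (simp add: Int_absorb2 flip: Int_Un_distrib)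
  ultimately obtain v where v: "v \<in> ?K" "v \<notin> ?X1" "v \<notin> ?X2" by fastforce
  have vV: "v \<in> V" using component_subset[OF x] v(1) by blast
  have V_v: "connected_on E (V - {v})" using nonsep v(1) by blast
  show ?thesis
    using block_vertex_if_connected_Diff[OF finite assms(2) vV V_v]
      detach_vertex_in_three_moves[OF finite V_v assms(3) assms(4) vV v(2)]
      detach_vertex_in_three_moves[OF finite V_v assms(3) assms(5) vV v(3)]
    by blast
qed

end
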